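(* If $R$ is an Armendariz ring, then for every $n\ge 1$ the upper triangular matrix ring $T_n(R)$ is almost Armendariz.
   Context: All rings are associative with identity. A ring $R$ is Armendariz if whenever $f(x)=\sum_{i=0}^m a_ix^i$, $g(x)=\sum_{j=0}^n b_jx^j\in R[x]$ satisfy $f(x)g(x)=0$, then $a_ib_j=0$ for all $i,j$. For a ring $R$, $P(R)$ denotes the prime radical of $R$ (the intersection of all prime ideals of $R$, equivalently the set of strongly nilpotent elements of $R$). A ring $R$ is called almost Armendariz if whenever $f(x)=\sum_{i=0}^m a_ix^i$ and $g(x)=\sum_{j=0}^n b_jx^j\in R[x]$ satisfy $f(x)g(x)=0$, then $a_ib_j\in P(R)$ for all $0\le i\le m$, $0\le j\le n$. $T_n(R)$ denotes the ring of $n\times n$ upper triangular matrices over $R$. *)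

theory Defs
  imports "HOL-Algebra.Ideal"
begin

text \<open>Polynomials f = sum a_i x^i (i \<le> m), g = sum b_j x^j (j \<le> n) over a
(not necessarily commutative) ring R are given by coefficient functions.\<close>

definition poly_prod_coeff ::
  "('a, 'm) ring_scheme \<Rightarrow> nat \<Rightarrow> nat \<Rightarrow> (nat \<Rightarrow> 'a) \<Rightarrow> (nat \<Rightarrow> 'a) \<Rightarrow> nat \<Rightarrow> 'a" where
  "poly_prod_coeff R m n a b k =
     finsum R (\<lambda>p. a (fst p) \<otimes>\<^bsub>R\<^esub> b (snd p))
       {p. fst p \<le> m \<and> snd p \<le> n \<and> fst p + snd p = k}"

definition armendariz :: "('a, 'm) ring_scheme \<Rightarrow> bool" where
  "armendariz R \<longleftrightarrow>
     (\<forall>m n a b. (\<forall>i\<le>m. a i \<in> carrier R) \<longrightarrow> (\<forall>j\<le>n. b j \<in> carrier R) \<longrightarrow>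
        (\<forall>k. poly_prod_coeff R m n a b k = \<zero>\<^bsub>R\<^esub>) \<longrightarrow>
        (\<forall>i\<le>m. \<forall>j\<le>n. a i \<otimes>\<^bsub>R\<^esub> b j = \<zero>\<^bsub>R\<^esub>))"

text \<open>Prime ideals of a not necessarily commutative ring: proper two-sided
ideals P such that for ideals A, B with AB \<subseteq> P one has A \<subseteq> P or B \<subseteq> P.
(AB \<subseteq> P is equivalent to all products a b with a in A, b in B lying in P,
since P is closed under finite sums.)\<close>

definition nc_prime_ideal :: "('a, 'm) ring_scheme \<Rightarrow> 'a set \<Rightarrow> bool" where
  "nc_prime_ideal R P \<longleftrightarrow> ideal P R \<and> P \<noteq> carrier R \<and>
     (\<forall>A B. ideal A R \<longrightarrow> ideal B R \<longrightarrow>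
        (\<forall>x\<in>A. \<forall>y\<in>B. x \<otimes>\<^bsub>R\<^esub> y \<in> P) \<longrightarrow> A \<subseteq> P \<or> B \<subseteq> P)"

text \<open>Prime radical: intersection of all prime ideals (carrier R if there are none).\<close>

definition prime_radical :: "('a, 'm) ring_scheme \<Rightarrow> 'a set" where
  "prime_radical R = carrier R \<inter> \<Inter> {P. nc_prime_ideal R P}"

definition almost_armendariz :: "('a, 'm) ring_scheme \<Rightarrow> bool" where
  "almost_armendariz R \<longleftrightarrow>
     (\<forall>m n a b. (\<forall>i\<le>m. a i \<in> carrier R) \<longrightarrow> (\<forall>j\<le>n. b j \<in> carrier R) \<longrightarrow>
        (\<forall>k. poly_prod_coeff R m n a b k = \<zero>\<^bsub>R\<^esub>) \<longrightarrow>
        (\<forall>i\<le>m. \<forall>j\<le>n. a i \<otimes>\<^bsub>R\<^esub> b j \<in> prime_radical R))"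

text \<open>A matrix is a
function nat \<Rightarrow> nat \<Rightarrow> 'a with indices 0..n-1; entries outside the index range
and below the diagonal are zero.\<close>

definition upper_tri_ring :: "('a, 'm) ring_scheme \<Rightarrow> nat \<Rightarrow> (nat \<Rightarrow> nat \<Rightarrow> 'a) ring" where
  "upper_tri_ring R n =
     \<lparr>carrier = {M. (\<forall>i j. i < n \<and> j < n \<longrightarrow> M i j \<in> carrier R) \<and>
                    (\<forall>i j. \<not> (i \<le> j \<and> j < n) \<longrightarrow> M i j = \<zero>\<^bsub>R\<^esub>)},
      mult = (\<lambda>A B i j. if i < n \<and> j < n
                        then finsum R (\<lambda>k. A i k \<otimes>\<^bsub>R\<^esub> B k j) {..<n} else \<zero>\<^bsub>R\<^esub>),
      one = (\<lambda>i j. if i = j \<and> i < n then \<one>\<^bsub>R\<^esub> else \<zero>\<^bsub>R\<^esub>),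
      zero = (\<lambda>i j. \<zero>\<^bsub>R\<^esub>),
      add = (\<lambda>A B i j. if i < n \<and> j < n then A i j \<oplus>\<^bsub>R\<^esub> B i j else \<zero>\<^bsub>R\<^esub>)\<rparr>"

end

theory Submission
  imports Defs
begin

text \<open>The strictly upper triangular matrices form an ideal J of T_n(R) with
J^n = 0, so J lies in every prime ideal. The diagonal entries of a product in
T_n(R) multiply entrywise, so f(x)g(x) = 0 over T_n(R) gives n vanishing
products of polynomials over R, one for each diagonal position. Since R is
Armendariz, every a_i b_j then has zero diagonal, i.e. lies in J and hence in
the prime radical.\<close>

lemma upper_tri_ring_simps:
  "carrier (upper_tri_ring R n) =
     {M. (\<forall>i j. i < n \<and> j < n \<longrightarrow> M i j \<in> carrier R) \<and>
         (\<forall>i j. \<not> (i \<le> j \<and> j < n) \<longrightarrow> M i j = \<zero>\<^bsub>R\<^esub>)}"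
  "A \<otimes>\<^bsub>upper_tri_ring R n\<^esub> B =
     (\<lambda>i j. if i < n \<and> j < n then finsum R (\<lambda>l. A i l \<otimes>\<^bsub>R\<^esub> B l j) {..<n} else \<zero>\<^bsub>R\<^esub>)"
  "\<zero>\<^bsub>upper_tri_ring R n\<^esub> = (\<lambda>i j. \<zero>\<^bsub>R\<^esub>)"
  "A \<oplus>\<^bsub>upper_tri_ring R n\<^esub> B =
     (\<lambda>i j. if i < n \<and> j < n then A i j \<oplus>\<^bsub>R\<^esub> B i j else \<zero>\<^bsub>R\<^esub>)"
  by (simp_all add: upper_tri_ring_def)

lemma upper_tri_entry_closed:
  assumes "ring R" "M \<in> carrier (upper_tri_ring R n)"
  shows "M i j \<in> carrier R"
  using assms ring.ring_simprules(2)[OF assms(1)]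
  by (cases "i < n \<and> j < n") (auto simp: upper_tri_ring_simps)

lemma upper_tri_mult_entry_eq_zero:
  assumes R: "ring R"
    and A: "A \<in> carrier (upper_tri_ring R n)" and B: "B \<in> carrier (upper_tri_ring R n)"
    and vanish: "\<And>l. l < n \<Longrightarrow> A i l = \<zero>\<^bsub>R\<^esub> \<or> B l j = \<zero>\<^bsub>R\<^esub>"
  shows "(A \<otimes>\<^bsub>upper_tri_ring R n\<^esub> B) i j = \<zero>\<^bsub>R\<^esub>"
proof -
  interpret ring R by fact
  have "finsum R (\<lambda>l. A i l \<otimes>\<^bsub>R\<^esub> B l j) {..<n} = finsum R (\<lambda>l. \<zero>\<^bsub>R\<^esub>) {..<n}"
  proof (rule finsum_cong')
    fix l assume "l \<in> {..<n}"
    then show "A i l \<otimes>\<^bsub>R\<^esub> B l j = \<zero>\<^bsub>R\<^esub>"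
      using vanish[of l] upper_tri_entry_closed[OF R A] upper_tri_entry_closed[OF R B] by auto
  qed simp_all
  then show ?thesis by (simp add: upper_tri_ring_simps)
qed

lemma upper_tri_mult_closed:
  assumes R: "ring R"
    and A: "A \<in> carrier (upper_tri_ring R n)" and B: "B \<in> carrier (upper_tri_ring R n)"
  shows "A \<otimes>\<^bsub>upper_tri_ring R n\<^esub> B \<in> carrier (upper_tri_ring R n)"
proof -
  interpret ring R by fact
  have "(A \<otimes>\<^bsub>upper_tri_ring R n\<^esub> B) i j = \<zero>\<^bsub>R\<^esub>" if "j < i" for i j
  proof (rule upper_tri_mult_entry_eq_zero[OF R A B])
    fix p
    show "A i p = \<zero>\<^bsub>R\<^esub> \<or> B p j = \<zero>\<^bsub>R\<^esub>"
      using A B \<open>j < i\<close> by (cases "p < i") (auto simp: upper_tri_ring_simps)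
  qed
  moreover have "finsum R (\<lambda>l. A i l \<otimes>\<^bsub>R\<^esub> B l j) {..<n} \<in> carrier R" for i j
    using upper_tri_entry_closed[OF R A] upper_tri_entry_closed[OF R B]
    by (auto intro!: finsum_closed)
  ultimately show ?thesis
    by (auto simp: upper_tri_ring_simps[of R n] not_le)
qed

lemma upper_tri_mult_diag:
  assumes R: "ring R"
    and A: "A \<in> carrier (upper_tri_ring R n)" and B: "B \<in> carrier (upper_tri_ring R n)"
    and "i < n"
  shows "(A \<otimes>\<^bsub>upper_tri_ring R n\<^esub> B) i i = A i i \<otimes>\<^bsub>R\<^esub> B i i"
proof -
  interpret ring R by fact
  have "finsum R (\<lambda>l. A i l \<otimes>\<^bsub>R\<^esub> B l i) {..<n}
      = finsum R (\<lambda>l. if i = l then A i l \<otimes>\<^bsub>R\<^esub> B l i else \<zero>\<^bsub>R\<^esub>) {..<n}"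
  proof (intro finsum_cong')
    fix l assume "l \<in> {..<n}"
    have "A i l = \<zero>\<^bsub>R\<^esub> \<or> B l i = \<zero>\<^bsub>R\<^esub>" if "l \<noteq> i"
      using A B that \<open>l \<in> {..<n}\<close> by (cases "l < i") (auto simp: upper_tri_ring_simps)
    then show "A i l \<otimes>\<^bsub>R\<^esub> B l i = (if i = l then A i l \<otimes>\<^bsub>R\<^esub> B l i else \<zero>\<^bsub>R\<^esub>)"
      using upper_tri_entry_closed[OF R A] upper_tri_entry_closed[OF R B] by auto
  qed (use upper_tri_entry_closed[OF R A] upper_tri_entry_closed[OF R B] in auto)
  then show ?thesis
    using finsum_singleton[of i "{..<n}" "\<lambda>l. A i l \<otimes>\<^bsub>R\<^esub> B l i"] \<open>i < n\<close>
      upper_tri_entry_closed[OF R A] upper_tri_entry_closed[OF R B]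
    by (simp add: upper_tri_ring_simps)
qed

lemma upper_tri_finsum_entry:
  assumes R: "ring R" and T: "ring (upper_tri_ring R n)" and "finite S"
    and "F \<in> S \<rightarrow> carrier (upper_tri_ring R n)" and "i < n" "j < n"
  shows "(finsum (upper_tri_ring R n) F S) i j = finsum R (\<lambda>s. F s i j) S"
  using \<open>finite S\<close> \<open>F \<in> S \<rightarrow> _\<close>
proof (induction S rule: finite_induct)
  case empty
  interpret T: ring "upper_tri_ring R n" by fact
  interpret ring R by fact
  show ?case by (simp add: upper_tri_ring_simps)
next
  case (insert s S)
  interpret T: ring "upper_tri_ring R n" by fact
  interpret ring R by fact
  have "(\<lambda>s. F s i j) \<in> insert s S \<rightarrow> carrier R"
    using insert.prems upper_tri_entry_closed[OF R] by blast
  then show ?case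
    using insert \<open>i < n\<close> \<open>j < n\<close> by (simp add: T.finsum_insert finsum_insert upper_tri_ring_simps)
qed

lemma upper_tri_poly_prod_coeff_diag:
  assumes R: "ring R" and T: "ring (upper_tri_ring R n)"
    and a: "\<forall>i\<le>m. a i \<in> carrier (upper_tri_ring R n)"
    and b: "\<forall>j\<le>d. b j \<in> carrier (upper_tri_ring R n)"
    and "l < n"
  shows "(poly_prod_coeff (upper_tri_ring R n) m d a b k) l l
       = poly_prod_coeff R m d (\<lambda>i. a i l l) (\<lambda>j. b j l l) k"
proof -
  interpret ring R by fact
  interpret T: ring "upper_tri_ring R n" by fact
  let ?S = "{p. fst p \<le> m \<and> snd p \<le> d \<and> fst p + snd p = k}"
  have "finite ?S"
    by (rule finite_subset[of _ "{..m} \<times> {..d}"]) auto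
  moreover have "(\<lambda>p. a (fst p) \<otimes>\<^bsub>upper_tri_ring R n\<^esub> b (snd p)) \<in> ?S \<rightarrow> carrier (upper_tri_ring R n)"
    using a b by auto
  ultimately have "(poly_prod_coeff (upper_tri_ring R n) m d a b k) l l
      = finsum R (\<lambda>p. (a (fst p) \<otimes>\<^bsub>upper_tri_ring R n\<^esub> b (snd p)) l l) ?S"
    unfolding poly_prod_coeff_def using upper_tri_finsum_entry[OF R T] \<open>l < n\<close> by blast
  also have "\<dots> = finsum R (\<lambda>p. a (fst p) l l \<otimes>\<^bsub>R\<^esub> b (snd p) l l) ?S"
    using a b upper_tri_mult_diag[OF R _ _ \<open>l < n\<close>] upper_tri_entry_closed[OF R]
    by (intro finsum_cong') (auto intro!: m_closed)
  finally show ?thesis unfolding poly_prod_coeff_def .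
qed

text \<open>Matrices whose entries below the k-th superdiagonal vanish; k = 0 gives all of
T_n(R) and k = 1 the strictly upper triangular matrices.\<close>

definition upper_band :: "('a, 'm) ring_scheme \<Rightarrow> nat \<Rightarrow> nat \<Rightarrow> (nat \<Rightarrow> nat \<Rightarrow> 'a) set" where
  "upper_band R n k = {M \<in> carrier (upper_tri_ring R n). \<forall>i j. j < i + k \<longrightarrow> M i j = \<zero>\<^bsub>R\<^esub>}"

lemma upper_band_0 [simp]: "upper_band R n 0 = carrier (upper_tri_ring R n)"
  by (auto simp: upper_band_def upper_tri_ring_simps)

lemma upper_band_dim_subset_zero: "upper_band R n n \<subseteq> {\<zero>\<^bsub>upper_tri_ring R n\<^esub>}"
proof
  fix M assume "M \<in> upper_band R n n"
  then have "M i j = \<zero>\<^bsub>R\<^esub>" for i j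
    by (cases "j < n") (auto simp: upper_band_def upper_tri_ring_simps)
  then show "M \<in> {\<zero>\<^bsub>upper_tri_ring R n\<^esub>}"
    by (auto simp: upper_tri_ring_simps(3))
qed

lemma upper_band_mult:
  assumes R: "ring R" and A: "A \<in> upper_band R n k" and B: "B \<in> upper_band R n l"
  shows "A \<otimes>\<^bsub>upper_tri_ring R n\<^esub> B \<in> upper_band R n (k + l)"
proof -
  have Ac: "A \<in> carrier (upper_tri_ring R n)" and Bc: "B \<in> carrier (upper_tri_ring R n)"
    using A B by (simp_all add: upper_band_def)
  have band: "(A \<otimes>\<^bsub>upper_tri_ring R n\<^esub> B) i j = \<zero>\<^bsub>R\<^esub>" if "j < i + (k + l)" for i j
  proof (rule upper_tri_mult_entry_eq_zero[OF R Ac Bc])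
    fix p
    show "A i p = \<zero>\<^bsub>R\<^esub> \<or> B p j = \<zero>\<^bsub>R\<^esub>"
      using A B that by (cases "p < i + k") (auto simp: upper_band_def)
  qed
  show ?thesis
    using upper_tri_mult_closed[OF R Ac Bc] band by (simp add: upper_band_def)
qed

lemma upper_band_ideal:
  assumes R: "ring R" and T: "ring (upper_tri_ring R n)"
  shows "ideal (upper_band R n k) (upper_tri_ring R n)"
proof -
  interpret ring R by fact
  interpret T: ring "upper_tri_ring R n" by fact
  have sub: "upper_band R n k \<subseteq> carrier (upper_tri_ring R n)"
    by (auto simp: upper_band_def)
  have left: "X \<otimes>\<^bsub>upper_tri_ring R n\<^esub> M \<in> upper_band R n k"
    if "M \<in> upper_band R n k" "X \<in> carrier (upper_tri_ring R n)" for M X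
    using upper_band_mult[OF R _ that(1), of X 0] that(2) by simp
  show ?thesis
  proof (rule idealI[OF T])
    show "subgroup (upper_band R n k) (add_monoid (upper_tri_ring R n))"
    proof (rule T.add.subgroupI[OF sub])
      show "upper_band R n k \<noteq> {}"
        using T.zero_closed by (auto simp: upper_band_def upper_tri_ring_simps)
    next
      fix M assume M: "M \<in> upper_band R n k"
      have "\<ominus>\<^bsub>upper_tri_ring R n\<^esub> M
          = (\<ominus>\<^bsub>upper_tri_ring R n\<^esub> \<one>\<^bsub>upper_tri_ring R n\<^esub>) \<otimes>\<^bsub>upper_tri_ring R n\<^esub> M"
        using M sub by (simp add: T.l_minus subset_iff)
      then show "\<ominus>\<^bsub>upper_tri_ring R n\<^esub> M \<in> upper_band R n k"
        using left[OF M] by simp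
    next
      fix M N assume "M \<in> upper_band R n k" "N \<in> upper_band R n k"
      then show "M \<oplus>\<^bsub>upper_tri_ring R n\<^esub> N \<in> upper_band R n k"
        using T.add.m_closed sub by (auto simp: upper_band_def upper_tri_ring_simps(4))
    qed
  next
    fix M X assume "M \<in> upper_band R n k" "X \<in> carrier (upper_tri_ring R n)"
    then show "M \<otimes>\<^bsub>upper_tri_ring R n\<^esub> X \<in> upper_band R n k"
      using upper_band_mult[OF R \<open>M \<in> upper_band R n k\<close>, of X 0] by simp
  qed (fact left)
qed

text \<open>The chain encodes (C 1)^N \<subseteq> P without forming products of ideals.\<close>

lemma nc_prime_ideal_contains_nilpotent_chain:
  assumes P: "nc_prime_ideal R P" and C: "\<And>k. ideal (C k) R"
    and mult: "\<And>k x y. x \<in> C 1 \<Longrightarrow> y \<in> C k \<Longrightarrow> x \<otimes>\<^bsub>R\<^esub> y \<in> C (Suc k)"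
    and "1 \<le> N" and "C N \<subseteq> P"
  shows "C 1 \<subseteq> P"
  using \<open>1 \<le> N\<close> \<open>C N \<subseteq> P\<close>
proof (induction N rule: nat_induct_at_least)
  case (Suc k)
  then have "\<forall>x\<in>C 1. \<forall>y\<in>C k. x \<otimes>\<^bsub>R\<^esub> y \<in> P"
    using mult by blast
  then have "C 1 \<subseteq> P \<or> C k \<subseteq> P"
    using P C[of 1] C[of k] unfolding nc_prime_ideal_def by (elim conjE allE impE)
  then show ?case using Suc.IH by blast
qed simp

lemma upper_band_1_subset_nc_prime_ideal:
  assumes R: "ring R" and P: "nc_prime_ideal (upper_tri_ring R n) P" and "1 \<le> n"
  shows "upper_band R n 1 \<subseteq> P"
proof (rule nc_prime_ideal_contains_nilpotent_chain[OF P _ _ \<open>1 \<le> n\<close>])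
  have T: "ring (upper_tri_ring R n)"
    using P by (simp add: nc_prime_ideal_def ideal_def)
  then show "ideal (upper_band R n k) (upper_tri_ring R n)" for k
    by (rule upper_band_ideal[OF R])
  have "\<zero>\<^bsub>upper_tri_ring R n\<^esub> \<in> P"
    using P by (simp add: nc_prime_ideal_def ideal_def additive_subgroup.zero_closed)
  then show "upper_band R n n \<subseteq> P"
    using upper_band_dim_subset_zero by blast
next
  show "x \<otimes>\<^bsub>upper_tri_ring R n\<^esub> y \<in> upper_band R n (Suc k)"
    if "x \<in> upper_band R n 1" "y \<in> upper_band R n k" for k x y
    using upper_band_mult[OF R that] by simp
qed

lemma armendariz_upper_tri_coeff_mult_strictly_upper:
  assumes R: "ring R" and T: "ring (upper_tri_ring R n)" and arm: "armendariz R"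
    and a: "\<forall>i\<le>m. a i \<in> carrier (upper_tri_ring R n)"
    and b: "\<forall>j\<le>d. b j \<in> carrier (upper_tri_ring R n)"
    and prod: "\<forall>k. poly_prod_coeff (upper_tri_ring R n) m d a b k = \<zero>\<^bsub>upper_tri_ring R n\<^esub>"
    and "i \<le> m" "j \<le> d"
  shows "a i \<otimes>\<^bsub>upper_tri_ring R n\<^esub> b j \<in> upper_band R n 1"
proof -
  have ai: "a i \<in> carrier (upper_tri_ring R n)" and bj: "b j \<in> carrier (upper_tri_ring R n)"
    using a b \<open>i \<le> m\<close> \<open>j \<le> d\<close> by auto
  have diag: "(a i \<otimes>\<^bsub>upper_tri_ring R n\<^esub> b j) l l = \<zero>\<^bsub>R\<^esub>" if "l < n" for l
  proof -
    have "\<forall>k. poly_prod_coeff R m d (\<lambda>i. a i l l) (\<lambda>j. b j l l) k = \<zero>\<^bsub>R\<^esub>"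
      using prod upper_tri_poly_prod_coeff_diag[OF R T a b \<open>l < n\<close>]
      by (simp add: upper_tri_ring_simps(3))
    moreover have "\<forall>i\<le>m. a i l l \<in> carrier R" "\<forall>j\<le>d. b j l l \<in> carrier R"
      using a b upper_tri_entry_closed[OF R] by blast+
    ultimately have "a i l l \<otimes>\<^bsub>R\<^esub> b j l l = \<zero>\<^bsub>R\<^esub>"
      using arm[unfolded armendariz_def, rule_format, of m "\<lambda>i. a i l l" d "\<lambda>j. b j l l" i j]
        \<open>i \<le> m\<close> \<open>j \<le> d\<close> by simp
    then show ?thesis
      using upper_tri_mult_diag[OF R ai bj \<open>l < n\<close>] by simp
  qed
  have closed: "a i \<otimes>\<^bsub>upper_tri_ring R n\<^esub> b j \<in> carrier (upper_tri_ring R n)"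
    using upper_tri_mult_closed[OF R ai bj] .
  have "(a i \<otimes>\<^bsub>upper_tri_ring R n\<^esub> b j) p q = \<zero>\<^bsub>R\<^esub>" if "q < p + 1" for p q
    using closed diag that
    by (cases "q = p \<and> p < n") (auto simp: upper_tri_ring_simps(1))
  with closed show ?thesis
    by (simp add: upper_band_def)
qed

theorem corollary2p1:
  fixes R :: "('a, 'm) ring_scheme" and n :: nat
  assumes "ring R" and "armendariz R" and "n \<ge> 1"
  shows "almost_armendariz (upper_tri_ring R n)"
  unfolding almost_armendariz_def
proof (intro allI impI)
  fix m d a b i j
  assume a: "\<forall>i\<le>m. a i \<in> carrier (upper_tri_ring R n)"
    and b: "\<forall>j\<le>d. b j \<in> carrier (upper_tri_ring R n)"
    and prod: "\<forall>k. poly_prod_coeff (upper_tri_ring R n) m d a b k = \<zero>\<^bsub>upper_tri_ring R n\<^esub>"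
    and "i \<le> m" "j \<le> d"
  \<comment> \<open>T_n(R) is never shown to be a ring: that comes with any prime ideal, and
      without prime ideals the prime radical is the whole carrier.\<close>
  have "a i \<otimes>\<^bsub>upper_tri_ring R n\<^esub> b j \<in> P" if P: "nc_prime_ideal (upper_tri_ring R n) P" for P
  proof -
    have T: "ring (upper_tri_ring R n)"
      using P by (simp add: nc_prime_ideal_def ideal_def)
    show ?thesis
      using armendariz_upper_tri_coeff_mult_strictly_upper[OF assms(1) T assms(2) a b prod
          \<open>i \<le> m\<close> \<open>j \<le> d\<close>]
        upper_band_1_subset_nc_prime_ideal[OF assms(1) P assms(3)] by blast
  qed
  moreover have "a i \<otimes>\<^bsub>upper_tri_ring R n\<^esub> b j \<in> carrier (upper_tri_ring R n)"
    using upper_tri_mult_closed[OF assms(1)] a b \<open>i \<le> m\<close> \<open>j \<le> d\<close> by blast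
  ultimately show "a i \<otimes>\<^bsub>upper_tri_ring R n\<^esub> b j \<in> prime_radical (upper_tri_ring R n)"
    by (simp add: prime_radical_def)
qed

end
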